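(* Let $p:\mathbb{R}\times\mathbb{R}\to\mathbb{R}$ be measurable with: (1) $p_{\alpha,\beta}>0$ almost everywhere; (2) $p_{\alpha,\beta}=p_{\beta,\alpha}$; (3) $p_{\alpha,\beta}$ is $\pi$-periodic in both arguments; (4) $p$ is essentially bounded. If $\gamma\in B^\infty_{\rm ap}(\mathbb{R},\mathbb{R}^2)$ maximizes $\omega_p$ over $B^\infty_{\rm ap}(\mathbb{R},\mathbb{R}^2)$, then $|\gamma(\alpha)|=1$ for almost all $\alpha$.
   Context: For $v,w\in\mathbb{R}^2$, $v\times w=v_1w_2-v_2w_1$. $L^\infty_{\rm ap}(\mathbb{R},\mathbb{R}^2)$ is the space of essentially bounded measurable $\gamma:\mathbb{R}\to\mathbb{R}^2$ with $\gamma(\alpha+\pi)=-\gamma(\alpha)$. $B^\infty_{\rm ap}(\mathbb{R},\mathbb{R}^2)$ is its subset with $\|\gamma_1^2+\gamma_2^2\|_\infty\le1$. For such $\gamma$, \[ \omega_p(\gamma)=\int_0^\pi\int_\alpha^\pi p_{\alpha,\beta}\,\gamma(\alpha)\times\gamma(\beta)\,d\beta\,d\alpha. \] *)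

theory Defs
  imports "HOL-Analysis.Analysis"
begin

definition cross2 :: "real \<times> real \<Rightarrow> real \<times> real \<Rightarrow> real" where
  "cross2 v w = fst v * snd w - snd v * fst w"

definition Linf_ap :: "(real \<Rightarrow> real \<times> real) set" where
  "Linf_ap = {\<gamma>. \<gamma> \<in> borel_measurable lebesgue
      \<and> (\<exists>C. AE \<alpha> in lebesgue. norm (\<gamma> \<alpha>) \<le> C)
      \<and> (AE \<alpha> in lebesgue. \<gamma> (\<alpha> + pi) = - \<gamma> \<alpha>)}"

definition Binf_ap :: "(real \<Rightarrow> real \<times> real) set" where
  "Binf_ap = {\<gamma> \<in> Linf_ap. AE \<alpha> in lebesgue. (fst (\<gamma> \<alpha>))\<^sup>2 + (snd (\<gamma> \<alpha>))\<^sup>2 \<le> 1}"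

definition omega :: "(real \<times> real \<Rightarrow> real) \<Rightarrow> (real \<Rightarrow> real \<times> real) \<Rightarrow> real" where
  "omega p \<gamma> = (LINT \<alpha>:{0..pi}|lebesgue.
       (LINT \<beta>:{\<alpha>..pi}|lebesgue. p (\<alpha>, \<beta>) * cross2 (\<gamma> \<alpha>) (\<gamma> \<beta>)))"

end

theory Submission
  imports Defs
begin

text \<open>
  Let \<open>\<gamma>\<close> be a maximiser, \<open>\<phi> = 1 - |\<gamma>|\<close> its slack and \<open>w(\<alpha>) = \<phi>(\<alpha>) (cos \<alpha>, sin \<alpha>)\<close>.
  As \<open>|\<gamma>|\<close> is \<open>\<pi>\<close>-periodic, \<open>w\<close> is antiperiodic, so \<open>\<gamma> \<plusminus> w\<close> are admissible, and since
  \<open>\<omega>\<^sub>p\<close> is a quadratic form the parallelogram identity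
  \<open>\<omega>\<^sub>p(\<gamma> + w) + \<omega>\<^sub>p(\<gamma> - w) = 2 \<omega>\<^sub>p(\<gamma>) + 2 \<omega>\<^sub>p(w)\<close> together with maximality gives
  \<open>\<omega>\<^sub>p(w) \<le> 0\<close>. But \<open>w(\<alpha>) \<times> w(\<beta>) = \<phi>(\<alpha>) \<phi>(\<beta>) sin (\<beta> - \<alpha>) \<ge> 0\<close> on the triangle
  \<open>0 \<le> \<alpha> \<le> \<beta> \<le> \<pi>\<close> and \<open>p > 0\<close> a.e., so the integrand of \<open>\<omega>\<^sub>p(w)\<close> vanishes a.e.:
  almost no pair \<open>\<alpha> < \<beta>\<close> in \<open>[0, \<pi>]\<close> has \<open>\<phi>(\<alpha>) \<phi>(\<beta>) > 0\<close>. By symmetry of the product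
  measure this makes \<open>{\<phi> > 0} \<inter> [0, \<pi>]\<close> null, and periodicity of \<open>|\<gamma>|\<close> extends this to \<open>\<real>\<close>.
\<close>

lemma sigma_finite_lebesgue: "sigma_finite_measure (lebesgue :: 'a::euclidean_space measure)"
proof
  have fin: "\<And>n. emeasure lborel (cball (0::'a) (real n)) \<noteq> top"
    using emeasure_bounded_finite[OF bounded_cball] by (metis infinity_ennreal_def less_irrefl)
  show "\<exists>A. countable A \<and> A \<subseteq> sets (lebesgue::'a measure) \<and> \<Union> A = space lebesgue \<and> (\<forall>a\<in>A. emeasure lebesgue a \<noteq> \<infinity>)"
    by (intro exI[of _ "range (\<lambda>n::nat. cball (0::'a) (real n))"])
       (auto simp: emeasure_completion real_arch_simple dist_norm fin intro: exI[of _ "nat \<lceil>norm _\<rceil>"])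
qed

lemma AE_lebesgue_translate:
  fixes c :: "'a::euclidean_space"
  assumes "AE x in lebesgue. P x"
  shows "AE x in lebesgue. P (x + c)"
proof -
  obtain N where N: "N \<in> null_sets lebesgue" "{x \<in> space lebesgue. \<not> P x} \<subseteq> N"
    using assms unfolding eventually_ae_filter by auto
  have "(+) (- c) ` N \<in> null_sets lebesgue"
    using N(1) negligible_translation negligible_iff_null_sets by blast
  moreover have "{x \<in> space lebesgue. \<not> P (x + c)} \<subseteq> (+) (- c) ` N"
    using N(2) by (auto intro!: image_eqI[where x="_ + c"])
  ultimately show ?thesis by (rule AE_I')
qed

lemma AE_lebesgue_periodic_shift:
  fixes T :: real
  assumes "AE x in lebesgue. P (x + T) = P x"
  shows "AE x in lebesgue. P (x + of_int n * T) = P x"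
proof -
  have nat_shift: "AE x in lebesgue. P (x + real m * T) = P x" for m :: nat
  proof (induction m)
    case (Suc m)
    show ?case
      using Suc AE_lebesgue_translate[OF assms, of "real m * T"]
      by eventually_elim (simp add: algebra_simps)
  qed simp
  show ?thesis
  proof (cases "0 \<le> n")
    case True
    then show ?thesis using nat_shift[of "nat n"] by simp
  next
    case False
    have "AE x in lebesgue. P (x + of_int n * T + real (nat (- n)) * T) = P (x + of_int n * T)"
      using AE_lebesgue_translate[OF nat_shift[of "nat (- n)"], of "of_int n * T"] .
    then show ?thesis using False by (simp add: of_nat_nat eq_commute)
  qed
qed

lemma AE_lebesgue_periodic:
  fixes T :: real
  assumes "0 < T"
    and base: "AE x in lebesgue. x \<in> {0..T} \<longrightarrow> P x"
    and periodic: "AE x in lebesgue. P (x + T) = P x"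
  shows "AE x in lebesgue. P x"
proof -
  have "AE x in lebesgue. \<forall>n::int. P (x + of_int n * T) = P x \<and> (x + of_int n * T \<in> {0..T} \<longrightarrow> P (x + of_int n * T))"
    using AE_lebesgue_periodic_shift[OF periodic] AE_lebesgue_translate[OF base]
    by (simp add: AE_all_countable AE_conj_iff)
  then show ?thesis
  proof eventually_elim
    case (elim x)
    define n where "n = - \<lfloor>x / T\<rfloor>"
    have "of_int \<lfloor>x / T\<rfloor> * T \<le> x"
      using of_int_floor_le[of "x / T"] \<open>0 < T\<close> by (metis pos_le_divide_eq)
    moreover have "x \<le> (of_int \<lfloor>x / T\<rfloor> + 1) * T"
      using real_of_int_floor_add_one_ge[of "x / T"] \<open>0 < T\<close> by (metis pos_divide_le_eq)
    ultimately have "x + of_int n * T \<in> {0..T}" by (simp add: n_def algebra_simps)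
    then show ?case using elim[rule_format, of n] by blast
  qed
qed

lemmas borel_measurable_lebesgue_ident [measurable] = id_borel_measurable_lebesgue[unfolded id_def]

lemma borel_measurable_fst_lebesgue [measurable]:
  "fst \<in> borel_measurable (lebesgue \<Otimes>\<^sub>M M :: ('a::euclidean_space \<times> 'b) measure)"
  by (rule measurable_compose[OF measurable_fst borel_measurable_lebesgue_ident])

lemma borel_measurable_snd_lebesgue [measurable]:
  "snd \<in> borel_measurable (M \<Otimes>\<^sub>M lebesgue :: ('b \<times> 'a::euclidean_space) measure)"
  by (rule measurable_compose[OF measurable_snd borel_measurable_lebesgue_ident])

lemma borel_measurable_prod_components [measurable (raw)]:
  fixes f :: "'a \<Rightarrow> 'b::second_countable_topology \<times> 'c::second_countable_topology"
  assumes "f \<in> borel_measurable M"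
  shows "(\<lambda>x. fst (f x)) \<in> borel_measurable M" "(\<lambda>x. snd (f x)) \<in> borel_measurable M"
  using assms by (simp_all add: borel_prod[symmetric] measurable_pair_iff comp_def)

lemma borel_measurable_pair_lebesgue:
  fixes q :: "'a::euclidean_space \<times> 'b::euclidean_space \<Rightarrow> 'c::topological_space"
  assumes "q \<in> borel_measurable borel"
  shows "q \<in> borel_measurable (lebesgue \<Otimes>\<^sub>M lebesgue)"
proof -
  have "(\<lambda>z. z) \<in> lebesgue \<Otimes>\<^sub>M lebesgue \<rightarrow>\<^sub>M (borel \<Otimes>\<^sub>M borel :: ('a \<times> 'b) measure)"
    by (simp add: measurable_pair_iff comp_def)
  from measurable_compose[OF this] assms show ?thesis
    by (simp add: borel_prod)
qed

lemma AE_notin_if_AE_pairs_ordered: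
  assumes E: "E \<in> sets lebesgue"
    and ordered: "AE x in lebesgue. AE y in lebesgue. x \<in> E \<and> y \<in> E \<longrightarrow> y < (x::real)"
  shows "AE x in lebesgue. x \<notin> E"
proof -
  interpret pair_sigma_finite "lebesgue :: real measure" "lebesgue :: real measure"
    by (intro pair_sigma_finite.intro sigma_finite_lebesgue)
  have "{z \<in> space (lebesgue \<Otimes>\<^sub>M lebesgue). fst z \<in> E \<and> snd z \<in> E \<longrightarrow> snd z < fst z}
      \<in> sets (lebesgue \<Otimes>\<^sub>M lebesgue)"
    using E by measurable
  with ordered have swapped: "AE x in lebesgue. AE y in lebesgue. y \<in> E \<and> x \<in> E \<longrightarrow> x < y"
    by (simp add: AE_commute)
  have "AE x in lebesgue. x \<in> E \<longrightarrow> (AE y in lebesgue. y \<notin> E)"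
    using ordered swapped
  proof eventually_elim
    case (elim x)
    show ?case
    proof
      assume "x \<in> E"
      from elim show "AE y in lebesgue. y \<notin> E"
        by eventually_elim (use \<open>x \<in> E\<close> in auto)
    qed
  qed
  then show ?thesis
    by (cases "AE y in lebesgue. y \<notin> E") auto
qed

lemma abs_cross2_le: "\<bar>cross2 v w\<bar> \<le> norm v * norm w"
proof -
  obtain a b c d where v: "v = (a, b)" and w: "w = (c, d)" by (cases v, cases w)
  have "(a * d - b * c)\<^sup>2 + (a * c + b * d)\<^sup>2 = (a\<^sup>2 + b\<^sup>2) * (c\<^sup>2 + d\<^sup>2)"
    by algebra
  then have "(a * d - b * c)\<^sup>2 \<le> (a\<^sup>2 + b\<^sup>2) * (c\<^sup>2 + d\<^sup>2)"
    by (metis le_add_same_cancel1 zero_le_power2)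
  then have "sqrt ((a * d - b * c)\<^sup>2) \<le> sqrt (a\<^sup>2 + b\<^sup>2) * sqrt (c\<^sup>2 + d\<^sup>2)"
    by (metis real_sqrt_le_mono real_sqrt_mult)
  then show ?thesis by (simp add: v w cross2_def norm_Pair)
qed

lemma norm_prod_le_1_iff: "norm (v :: real \<times> real) \<le> 1 \<longleftrightarrow> (fst v)\<^sup>2 + (snd v)\<^sup>2 \<le> 1"
  by (cases v) (simp add: norm_Pair)

lemma Binf_apD:
  assumes "\<gamma> \<in> Binf_ap"
  shows "\<gamma> \<in> borel_measurable lebesgue" "AE \<alpha> in lebesgue. \<gamma> (\<alpha> + pi) = - \<gamma> \<alpha>"
    "AE \<alpha> in lebesgue. norm (\<gamma> \<alpha>) \<le> 1"
  using assms by (auto simp: Binf_ap_def Linf_ap_def norm_prod_le_1_iff)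

text \<open>
  Fubini is applied on \<open>lebesgue \<Otimes>\<^sub>M lebesgue\<close>, which does not measure all Lebesgue sets of
  the plane, so \<open>p\<close> is replaced by a Borel kernel \<open>q\<close> that agrees with it almost everywhere.
\<close>
definition omega_kernel :: "(real \<times> real \<Rightarrow> real) \<Rightarrow> (real \<Rightarrow> real \<times> real) \<Rightarrow> real \<times> real \<Rightarrow> real" where
  "omega_kernel q f z =
     indicator {0..pi} (fst z) * indicator {fst z..pi} (snd z) * q z * cross2 (f (fst z)) (f (snd z))"

lemma borel_measurable_omega_kernel [measurable]:
  assumes q: "q \<in> borel_measurable borel" and f: "f \<in> borel_measurable lebesgue"
  shows "omega_kernel q f \<in> borel_measurable (lebesgue \<Otimes>\<^sub>M lebesgue)"
proof -
  have [measurable]: "q \<in> borel_measurable (lebesgue \<Otimes>\<^sub>M lebesgue)"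
    using q by (rule borel_measurable_pair_lebesgue)
  note f [measurable]
  have "omega_kernel q f = (\<lambda>z. of_bool (0 \<le> fst z \<and> fst z \<le> pi \<and> fst z \<le> snd z \<and> snd z \<le> pi) * q z *
      (fst (f (fst z)) * snd (f (snd z)) - snd (f (fst z)) * fst (f (snd z))))"
    by (auto simp: omega_kernel_def fun_eq_iff cross2_def indicator_def)
  also have "\<dots> \<in> borel_measurable (lebesgue \<Otimes>\<^sub>M lebesgue)"
    by measurable
  finally show ?thesis .
qed

lemma integrable_omega_kernel:
  assumes q: "q \<in> borel_measurable borel" and q_bound: "\<And>z. \<bar>q z\<bar> \<le> C"
    and f: "f \<in> borel_measurable lebesgue" and f_bound: "AE \<alpha> in lebesgue. norm (f \<alpha>) \<le> B"
  shows "integrable (lebesgue \<Otimes>\<^sub>M lebesgue) (omega_kernel q f)"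
proof -
  interpret pair_sigma_finite "lebesgue :: real measure" "lebesgue :: real measure"
    by (intro pair_sigma_finite.intro sigma_finite_lebesgue)
  let ?M = "lebesgue \<Otimes>\<^sub>M lebesgue :: (real \<times> real) measure"
  let ?S = "{0..pi} \<times> {0..pi} :: (real \<times> real) set"
  note f [measurable]
  have "emeasure ?M ?S < \<infinity>"
    by (simp add: M1.emeasure_pair_measure_Times emeasure_completion ennreal_mult_less_top)
  then have bound_integrable: "integrable ?M (\<lambda>z. indicator ?S z *\<^sub>R (C * (B * B)))"
    by (intro integrable_indicator) (auto intro: pair_measureI)
  have "AE z in ?M. norm (f (fst z)) \<le> B \<and> norm (f (snd z)) \<le> B"
    using f_bound by (intro AE_pair_measure) (measurable, auto elim: eventually_mono)
  then have "AE z in ?M. norm (omega_kernel q f z) \<le> norm (indicator ?S z *\<^sub>R (C * (B * B)))"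
  proof eventually_elim
    case (elim z)
    have "0 \<le> B" using elim norm_ge_zero order_trans by blast
    have "0 \<le> C" using q_bound[of z] by linarith
    have "\<bar>cross2 (f (fst z)) (f (snd z))\<bar> \<le> B * B"
      using abs_cross2_le[of "f (fst z)" "f (snd z)"] elim \<open>0 \<le> B\<close>
      by (smt (verit) mult_mono norm_ge_zero)
    then have "\<bar>q z * cross2 (f (fst z)) (f (snd z))\<bar> \<le> C * (B * B)"
      unfolding abs_mult using q_bound[of z] \<open>0 \<le> C\<close> by (intro mult_mono) auto
    then show ?case using \<open>0 \<le> B\<close> \<open>0 \<le> C\<close>
      by (cases z) (auto simp: omega_kernel_def indicator_def abs_mult)
  qed
  then show ?thesis using q f
    by (intro Bochner_Integration.integrable_bound[OF bound_integrable]) auto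
qed

lemma omega_eq_integral_omega_kernel:
  assumes q: "q \<in> borel_measurable borel" and q_bound: "\<And>z. \<bar>q z\<bar> \<le> C"
    and p_eq_q: "AE \<alpha> in lebesgue. AE \<beta> in lebesgue. p (\<alpha>, \<beta>) = q (\<alpha>, \<beta>)"
    and f: "f \<in> borel_measurable lebesgue" and f_bound: "AE \<alpha> in lebesgue. norm (f \<alpha>) \<le> B"
  shows "omega p f = integral\<^sup>L (lebesgue \<Otimes>\<^sub>M lebesgue) (omega_kernel q f)"
proof -
  interpret pair_sigma_finite "lebesgue :: real measure" "lebesgue :: real measure"
    by (intro pair_sigma_finite.intro sigma_finite_lebesgue)
  let ?K = "omega_kernel q f"
  have K [measurable]: "?K \<in> borel_measurable (lebesgue \<Otimes>\<^sub>M lebesgue)"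
    using q f by measurable
  have inner: "AE \<alpha> in lebesgue. (\<integral>\<beta>. ?K (\<alpha>, \<beta>) \<partial>lebesgue)
      = indicator {0..pi} \<alpha> *\<^sub>R (LINT \<beta>:{\<alpha>..pi}|lebesgue. p (\<alpha>, \<beta>) * cross2 (f \<alpha>) (f \<beta>))"
    using p_eq_q
  proof eventually_elim
    case (elim \<alpha>)
    show ?case
    proof (cases "\<alpha> \<in> {0..pi}")
      case True
      have ae: "AE \<beta> in lebesgue. ?K (\<alpha>, \<beta>) = indicator {\<alpha>..pi} \<beta> *\<^sub>R (p (\<alpha>, \<beta>) * cross2 (f \<alpha>) (f \<beta>))"
        using elim by eventually_elim (use True in \<open>simp add: omega_kernel_def\<close>)
      have K_\<alpha>: "(\<lambda>\<beta>. ?K (\<alpha>, \<beta>)) \<in> borel_measurable lebesgue"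
        by measurable
      from integral_cong_AE[OF K_\<alpha> borel_measurable_AE[OF K_\<alpha> ae] ae]
      have "(\<integral>\<beta>. ?K (\<alpha>, \<beta>) \<partial>lebesgue) = (LINT \<beta>:{\<alpha>..pi}|lebesgue. p (\<alpha>, \<beta>) * cross2 (f \<alpha>) (f \<beta>))"
        by (simp add: set_lebesgue_integral_def)
      with True show ?thesis by simp
    qed (simp add: omega_kernel_def)
  qed
  have outer: "(\<lambda>\<alpha>. \<integral>\<beta>. ?K (\<alpha>, \<beta>) \<partial>lebesgue) \<in> borel_measurable lebesgue"
    by (rule M1.borel_measurable_lebesgue_integral) simp
  from integral_cong_AE[OF outer borel_measurable_AE[OF outer inner] inner]
  have "omega p f = (\<integral>\<alpha>. \<integral>\<beta>. ?K (\<alpha>, \<beta>) \<partial>lebesgue \<partial>lebesgue)"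
    by (simp add: omega_def set_lebesgue_integral_def[of _ "{0..pi}"])
  also have "\<dots> = integral\<^sup>L (lebesgue \<Otimes>\<^sub>M lebesgue) ?K"
    by (intro integral_fst' integrable_omega_kernel[OF q q_bound f f_bound])
  finally show ?thesis .
qed

lemma omega_parallelogram:
  assumes q: "q \<in> borel_measurable borel" and q_bound: "\<And>z. \<bar>q z\<bar> \<le> C"
    and p_eq_q: "AE \<alpha> in lebesgue. AE \<beta> in lebesgue. p (\<alpha>, \<beta>) = q (\<alpha>, \<beta>)"
    and f: "f \<in> borel_measurable lebesgue" and f_bound: "AE \<alpha> in lebesgue. norm (f \<alpha>) \<le> B"
    and g: "g \<in> borel_measurable lebesgue" and g_bound: "AE \<alpha> in lebesgue. norm (g \<alpha>) \<le> B"
  shows "omega p (\<lambda>\<alpha>. f \<alpha> + g \<alpha>) + omega p (\<lambda>\<alpha>. f \<alpha> - g \<alpha>) = 2 * omega p f + 2 * omega p g"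
proof -
  let ?M = "lebesgue \<Otimes>\<^sub>M lebesgue :: (real \<times> real) measure"
  have sum_meas: "(\<lambda>\<alpha>. f \<alpha> + g \<alpha>) \<in> borel_measurable lebesgue"
    and diff_meas: "(\<lambda>\<alpha>. f \<alpha> - g \<alpha>) \<in> borel_measurable lebesgue"
    using f g by simp_all
  have sum_bound: "AE \<alpha> in lebesgue. norm (f \<alpha> + g \<alpha>) \<le> 2 * B"
    using f_bound g_bound by eventually_elim (smt (verit) norm_triangle_ineq)
  have diff_bound: "AE \<alpha> in lebesgue. norm (f \<alpha> - g \<alpha>) \<le> 2 * B"
    using f_bound g_bound by eventually_elim (smt (verit) norm_triangle_ineq4)
  note omega_eq = omega_eq_integral_omega_kernel[OF q q_bound p_eq_q]
  note integrable = integrable_omega_kernel[OF q q_bound]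
  have "omega p (\<lambda>\<alpha>. f \<alpha> + g \<alpha>) + omega p (\<lambda>\<alpha>. f \<alpha> - g \<alpha>)
      = integral\<^sup>L ?M (\<lambda>z. omega_kernel q (\<lambda>\<alpha>. f \<alpha> + g \<alpha>) z + omega_kernel q (\<lambda>\<alpha>. f \<alpha> - g \<alpha>) z)"
    by (simp add: omega_eq[OF sum_meas sum_bound] omega_eq[OF diff_meas diff_bound]
        integrable[OF sum_meas sum_bound] integrable[OF diff_meas diff_bound])
  also have "\<dots> = integral\<^sup>L ?M (\<lambda>z. 2 * omega_kernel q f z + 2 * omega_kernel q g z)"
    by (simp add: omega_kernel_def cross2_def algebra_simps)
  also have "\<dots> = 2 * omega p f + 2 * omega p g"
    by (simp add: omega_eq[OF f f_bound] omega_eq[OF g g_bound]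
        integrable[OF f f_bound] integrable[OF g g_bound])
  finally show ?thesis .
qed

lemma obtain_positive_borel_kernel:
  fixes p :: "real \<times> real \<Rightarrow> real"
  assumes p_meas: "p \<in> borel_measurable lebesgue" and p_pos: "AE x in lebesgue. p x > 0"
    and p_bdd: "\<exists>C. AE x in lebesgue. \<bar>p x\<bar> \<le> C"
  obtains q C where "q \<in> borel_measurable borel" "\<And>z. 0 \<le> q z" "\<And>z. \<bar>q z\<bar> \<le> C"
    "AE \<alpha> in lebesgue. AE \<beta> in lebesgue. p (\<alpha>, \<beta>) = q (\<alpha>, \<beta>)"
    "AE \<alpha> in lebesgue. AE \<beta> in lebesgue. 0 < q (\<alpha>, \<beta>)"
proof -
  obtain C where C: "AE x in lebesgue. \<bar>p x\<bar> \<le> C" using p_bdd by blast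
  obtain q0 where q0: "q0 \<in> borel_measurable lborel" "AE x in lborel. p x = q0 x"
    using completion_ex_borel_measurable_real[OF p_meas] by blast
  define q where "q z = max 0 (min C (q0 z))" for z
  have "q \<in> borel_measurable borel"
    using q0(1) unfolding q_def by (simp add: measurable_lborel1)
  moreover have "0 \<le> q z" "\<bar>q z\<bar> \<le> max 0 C" for z
    by (auto simp: q_def)
  moreover have "AE z in lborel \<Otimes>\<^sub>M lborel. p z = q z \<and> 0 < q z"
    using q0(2) C p_pos unfolding lborel_prod AE_completion_iff
    by eventually_elim (auto simp: q_def)
  then have "AE \<alpha> in lebesgue. AE \<beta> in lebesgue. p (\<alpha>, \<beta>) = q (\<alpha>, \<beta>) \<and> 0 < q (\<alpha>, \<beta>)"
    unfolding AE_completion_iff by (rule lborel_pair.AE_pair)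
  then have "AE \<alpha> in lebesgue. AE \<beta> in lebesgue. p (\<alpha>, \<beta>) = q (\<alpha>, \<beta>)"
    "AE \<alpha> in lebesgue. AE \<beta> in lebesgue. 0 < q (\<alpha>, \<beta>)"
    by (simp_all add: AE_conj_iff)
  ultimately show ?thesis using that by blast
qed

definition slack :: "(real \<Rightarrow> real \<times> real) \<Rightarrow> real \<Rightarrow> real" where
  "slack \<gamma> \<alpha> = max 0 (1 - norm (\<gamma> \<alpha>))"

definition slack_field :: "(real \<Rightarrow> real \<times> real) \<Rightarrow> real \<Rightarrow> real \<times> real" where
  "slack_field \<gamma> \<alpha> = slack \<gamma> \<alpha> *\<^sub>R (cos \<alpha>, sin \<alpha>)"

lemma slack_nonneg: "0 \<le> slack \<gamma> \<alpha>"
  by (simp add: slack_def)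

lemma norm_slack_field [simp]: "norm (slack_field \<gamma> \<alpha>) = slack \<gamma> \<alpha>"
  unfolding slack_field_def norm_scaleR by (simp add: norm_Pair slack_nonneg)

lemma cross2_slack_field:
  "cross2 (slack_field \<gamma> a) (slack_field \<gamma> b) = slack \<gamma> a * slack \<gamma> b * sin (b - a)"
  by (simp add: slack_field_def cross2_def sin_diff algebra_simps)

lemma borel_measurable_slack_field [measurable]:
  assumes [measurable]: "\<gamma> \<in> borel_measurable lebesgue"
  shows "slack_field \<gamma> \<in> borel_measurable lebesgue"
proof -
  have "slack_field \<gamma> = (\<lambda>\<alpha>. (slack \<gamma> \<alpha> * cos \<alpha>, slack \<gamma> \<alpha> * sin \<alpha>))"
    by (simp add: slack_field_def fun_eq_iff)
  also have "\<dots> \<in> borel_measurable lebesgue"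
    unfolding slack_def by measurable
  finally show ?thesis .
qed

lemma Binf_ap_add_slack_field:
  assumes \<gamma>: "\<gamma> \<in> Binf_ap" and "\<bar>s\<bar> \<le> 1"
  shows "(\<lambda>\<alpha>. \<gamma> \<alpha> + s *\<^sub>R slack_field \<gamma> \<alpha>) \<in> Binf_ap"
proof -
  note \<gamma>_meas [measurable] = Binf_apD(1)[OF \<gamma>]
  have "AE \<alpha> in lebesgue. norm (\<gamma> \<alpha> + s *\<^sub>R slack_field \<gamma> \<alpha>) \<le> 1"
    using Binf_apD(3)[OF \<gamma>]
  proof eventually_elim
    case (elim \<alpha>)
    have "norm (\<gamma> \<alpha> + s *\<^sub>R slack_field \<gamma> \<alpha>) \<le> norm (\<gamma> \<alpha>) + \<bar>s\<bar> * slack \<gamma> \<alpha>"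
      by (metis norm_scaleR norm_slack_field norm_triangle_ineq)
    also have "\<dots> \<le> norm (\<gamma> \<alpha>) + slack \<gamma> \<alpha>"
      using \<open>\<bar>s\<bar> \<le> 1\<close> by (simp add: mult_left_le_one_le slack_nonneg)
    also have "\<dots> = 1"
      using elim by (simp add: slack_def)
    finally show ?case .
  qed
  moreover have "AE \<alpha> in lebesgue. \<gamma> (\<alpha> + pi) + s *\<^sub>R slack_field \<gamma> (\<alpha> + pi) = - (\<gamma> \<alpha> + s *\<^sub>R slack_field \<gamma> \<alpha>)"
    using Binf_apD(2)[OF \<gamma>] by eventually_elim (simp add: slack_field_def slack_def)
  ultimately show ?thesis
    by (auto simp: Binf_ap_def Linf_ap_def norm_prod_le_1_iff[symmetric] intro!: exI[of _ 1])
qed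

lemma omega_slack_field_nonpos:
  assumes q: "q \<in> borel_measurable borel" and q_bound: "\<And>z. \<bar>q z\<bar> \<le> C"
    and p_eq_q: "AE \<alpha> in lebesgue. AE \<beta> in lebesgue. p (\<alpha>, \<beta>) = q (\<alpha>, \<beta>)"
    and \<gamma>: "\<gamma> \<in> Binf_ap" and \<gamma>_max: "\<forall>\<eta> \<in> Binf_ap. omega p \<eta> \<le> omega p \<gamma>"
  shows "omega p (slack_field \<gamma>) \<le> 0"
proof -
  note \<gamma>_meas [measurable] = Binf_apD(1)[OF \<gamma>]
  have "omega p (\<lambda>\<alpha>. \<gamma> \<alpha> + slack_field \<gamma> \<alpha>) + omega p (\<lambda>\<alpha>. \<gamma> \<alpha> - slack_field \<gamma> \<alpha>)
      = 2 * omega p \<gamma> + 2 * omega p (slack_field \<gamma>)"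
    using Binf_apD(3)[OF \<gamma>]
    by (intro omega_parallelogram[OF q q_bound p_eq_q]) (auto simp: slack_def)
  moreover have "omega p (\<lambda>\<alpha>. \<gamma> \<alpha> + slack_field \<gamma> \<alpha>) \<le> omega p \<gamma>"
    using \<gamma>_max Binf_ap_add_slack_field[OF \<gamma>, of 1] by simp
  moreover have "omega p (\<lambda>\<alpha>. \<gamma> \<alpha> - slack_field \<gamma> \<alpha>) \<le> omega p \<gamma>"
    using \<gamma>_max Binf_ap_add_slack_field[OF \<gamma>, of "-1"] by simp
  ultimately show ?thesis by linarith
qed

lemma omega_kernel_slack_field:
  "omega_kernel q (slack_field \<gamma>) (a, b)
     = indicator {0..pi} a * indicator {a..pi} b * q (a, b) * (slack \<gamma> a * slack \<gamma> b * sin (b - a))"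
  by (simp add: omega_kernel_def cross2_slack_field)

lemma omega_kernel_slack_field_nonneg:
  assumes "\<And>z. 0 \<le> q z"
  shows "0 \<le> omega_kernel q (slack_field \<gamma>) z"
proof (cases z)
  case (Pair a b)
  have "0 \<le> sin (b - a)" if "0 \<le> a" "a \<le> b" "b \<le> pi"
    using that by (intro sin_ge_zero) auto
  then show ?thesis
    using assms[of z] by (auto simp: Pair omega_kernel_slack_field indicator_def slack_nonneg)
qed

lemma AE_omega_kernel_slack_field_eq_0:
  assumes q: "q \<in> borel_measurable borel" and q_nonneg: "\<And>z. 0 \<le> q z" and q_bound: "\<And>z. \<bar>q z\<bar> \<le> C"
    and p_eq_q: "AE \<alpha> in lebesgue. AE \<beta> in lebesgue. p (\<alpha>, \<beta>) = q (\<alpha>, \<beta>)"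
    and \<gamma>: "\<gamma> \<in> borel_measurable lebesgue" and omega_nonpos: "omega p (slack_field \<gamma>) \<le> 0"
  shows "AE \<alpha> in lebesgue. AE \<beta> in lebesgue. omega_kernel q (slack_field \<gamma>) (\<alpha>, \<beta>) = 0"
proof -
  interpret pair_sigma_finite "lebesgue :: real measure" "lebesgue :: real measure"
    by (intro pair_sigma_finite.intro sigma_finite_lebesgue)
  let ?M = "lebesgue \<Otimes>\<^sub>M lebesgue :: (real \<times> real) measure"
  let ?K = "omega_kernel q (slack_field \<gamma>)"
  have field: "slack_field \<gamma> \<in> borel_measurable lebesgue" "AE \<alpha> in lebesgue. norm (slack_field \<gamma> \<alpha>) \<le> 1"
    using \<gamma> by (auto simp: slack_def)
  note K_nonneg = omega_kernel_slack_field_nonneg[OF q_nonneg]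
  have "integral\<^sup>L ?M ?K = omega p (slack_field \<gamma>)"
    by (rule omega_eq_integral_omega_kernel[OF q q_bound p_eq_q field, symmetric])
  moreover have "0 \<le> integral\<^sup>L ?M ?K"
    using K_nonneg by (intro integral_nonneg_AE AE_I2)
  ultimately have "integral\<^sup>L ?M ?K = 0"
    using omega_nonpos by linarith
  with integral_nonneg_eq_0_iff_AE[OF integrable_omega_kernel[OF q q_bound field] AE_I2[OF K_nonneg]]
  have "AE z in ?M. ?K z = 0" by simp
  then show ?thesis by (rule AE_pair)
qed

lemma AE_norm_eq_1_on_half_period:
  assumes q_pos: "AE \<alpha> in lebesgue. AE \<beta> in lebesgue. 0 < q (\<alpha>, \<beta>)"
    and K_zero: "AE \<alpha> in lebesgue. AE \<beta> in lebesgue. omega_kernel q (slack_field \<gamma>) (\<alpha>, \<beta>) = 0"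
    and \<gamma>: "\<gamma> \<in> Binf_ap"
  shows "AE \<alpha> in lebesgue. \<alpha> \<in> {0..pi} \<longrightarrow> norm (\<gamma> \<alpha>) = 1"
proof -
  note \<gamma>_meas [measurable] = Binf_apD(1)[OF \<gamma>]
  define E where "E = {\<alpha> \<in> {0..pi}. 0 < slack \<gamma> \<alpha>}"
  have E_meas: "E \<in> sets lebesgue"
  proof -
    have "E = {\<alpha> \<in> space lebesgue. 0 \<le> \<alpha> \<and> \<alpha> \<le> pi \<and> 0 < slack \<gamma> \<alpha>}"
      by (auto simp: E_def)
    also have "\<dots> \<in> sets lebesgue"
      unfolding slack_def by measurable
    finally show ?thesis .
  qed
  \<comment> \<open>\<open>sin (\<beta> - \<alpha>)\<close> also vanishes at the corner \<open>\<alpha> = 0\<close>, \<open>\<beta> = pi\<close> of the triangle\<close>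
  have off_diagonal: "AE \<alpha> in lebesgue. AE \<beta> in lebesgue. \<beta> \<noteq> \<alpha> \<and> \<beta> \<noteq> \<alpha> + pi"
    by (intro AE_I2 AE_conjI AE_completion AE_lborel_singleton)
  have "AE \<alpha> in lebesgue. AE \<beta> in lebesgue. \<alpha> \<in> E \<and> \<beta> \<in> E \<longrightarrow> \<beta> < \<alpha>"
    using K_zero q_pos off_diagonal
  proof eventually_elim
    case (elim \<alpha>)
    from elim show ?case
    proof eventually_elim
      case (elim \<beta>)
      show ?case
      proof (rule impI, rule ccontr)
        assume "\<alpha> \<in> E \<and> \<beta> \<in> E" and "\<not> \<beta> < \<alpha>"
        then have "0 \<le> \<alpha>" "\<alpha> < \<beta>" "\<beta> \<le> pi" "0 < slack \<gamma> \<alpha>" "0 < slack \<gamma> \<beta>"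
          using elim by (auto simp: E_def)
        moreover have "0 < sin (\<beta> - \<alpha>)"
          using calculation elim by (intro sin_gt_zero) auto
        ultimately have "0 < omega_kernel q (slack_field \<gamma>) (\<alpha>, \<beta>)"
          using elim by (simp add: omega_kernel_slack_field)
        with elim show False by simp
      qed
    qed
  qed
  then have "AE \<alpha> in lebesgue. \<alpha> \<notin> E"
    by (rule AE_notin_if_AE_pairs_ordered[OF E_meas])
  with Binf_apD(3)[OF \<gamma>] show ?thesis
    by eventually_elim (auto simp: E_def slack_def)
qed

theorem lemma4p3:
  fixes p :: "real \<times> real \<Rightarrow> real" and \<gamma> :: "real \<Rightarrow> real \<times> real"
  assumes p_meas: "p \<in> borel_measurable lebesgue"
    and p_pos: "AE x in lebesgue. p x > 0"
    and p_sym: "\<And>\<alpha> \<beta>. p (\<alpha>, \<beta>) = p (\<beta>, \<alpha>)"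
    and p_per1: "\<And>\<alpha> \<beta>. p (\<alpha> + pi, \<beta>) = p (\<alpha>, \<beta>)"
    and p_per2: "\<And>\<alpha> \<beta>. p (\<alpha>, \<beta> + pi) = p (\<alpha>, \<beta>)"
    and p_bdd: "\<exists>C. AE x in lebesgue. \<bar>p x\<bar> \<le> C"
    and \<gamma>_in: "\<gamma> \<in> Binf_ap"
    and \<gamma>_max: "\<forall>\<eta> \<in> Binf_ap. omega p \<eta> \<le> omega p \<gamma>"
  shows "AE \<alpha> in lebesgue. norm (\<gamma> \<alpha>) = 1"
proof -
  obtain q C where q: "q \<in> borel_measurable borel" "\<And>z. 0 \<le> q z" "\<And>z. \<bar>q z\<bar> \<le> C"
    and p_eq_q: "AE \<alpha> in lebesgue. AE \<beta> in lebesgue. p (\<alpha>, \<beta>) = q (\<alpha>, \<beta>)"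
    and q_pos: "AE \<alpha> in lebesgue. AE \<beta> in lebesgue. 0 < q (\<alpha>, \<beta>)"
    using obtain_positive_borel_kernel[OF p_meas p_pos p_bdd] by blast
  have "omega p (slack_field \<gamma>) \<le> 0"
    by (rule omega_slack_field_nonpos[OF q(1,3) p_eq_q \<gamma>_in \<gamma>_max])
  with Binf_apD(1)[OF \<gamma>_in]
  have "AE \<alpha> in lebesgue. AE \<beta> in lebesgue. omega_kernel q (slack_field \<gamma>) (\<alpha>, \<beta>) = 0"
    by (rule AE_omega_kernel_slack_field_eq_0[OF q p_eq_q])
  then have half_period: "AE \<alpha> in lebesgue. \<alpha> \<in> {0..pi} \<longrightarrow> norm (\<gamma> \<alpha>) = 1"
    by (rule AE_norm_eq_1_on_half_period[OF q_pos _ \<gamma>_in])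
  from Binf_apD(2)[OF \<gamma>_in]
  have "AE \<alpha> in lebesgue. (norm (\<gamma> (\<alpha> + pi)) = 1) = (norm (\<gamma> \<alpha>) = 1)"
    by eventually_elim simp
  with half_period show ?thesis
    by (rule AE_lebesgue_periodic[OF pi_gt_zero])
qed

end
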